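(* Let $n\geq 4$ and $m=\lfloor (n-2)/2\rfloor$. Let $G_m$ be the group generated by the maps in $\mathcal C_n$, acting on the set of all permutations of length $n$. Then every orbit of this action has size $2^m$, and for any orbit $A$, \[\sum_{p\in A} z^{\mathrm{run}(p)} = z^a(1+z)^m\] for some nonnegative integer $a$.
   Context: For a permutation $p=p_1p_2\cdots p_n$ and an index $i\in[2,n-1]$, $p$ changes direction at $i$ if $p_{i-1}<p_i>p_{i+1}$ or $p_{i-1}>p_i<p_{i+1}$; $\mathrm{run}(p)=k$ means $p$ changes direction exactly $k-1$ times (the number of alternating runs). For a string $s$ of distinct integers with underlying set $S$, its complement relative to $S$ is obtained by replacing, for each $j$, the $j$th smallest element of $S$ by the $j$th largest element of $S$. For $1\leq i\leq n$, $c_i$ is the map on permutations of length $n$ that leaves $p_1\cdots p_{i-1}$ unchanged and replaces $p_ip_{i+1}\cdots p_n$ by its complement relative to $\{p_i,\dots,p_n\}$. If $n$ is even, $\mathcal C_n=\{c_3,c_5,c_7,\dots,c_{n-1}\}$; if $n$ is odd, $\mathcal C_n=\{c_3,c_5,c_7,\dots,c_{n-2}\}$. In both cases $\mathcal C_n$ has $m=\lfloor (n-2)/2\rfloor$ elements, each an involution, pairwise commuting, so they generate a group $G_m\cong(\mathbb Z_2)^m$ acting on permutations of length $n$. *)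

theory Defs
  imports "HOL-Combinatorics.Multiset_Permutations" "HOL-Computational_Algebra.Polynomial"
begin

text \<open>Permutations of length n are lists in permutations_of_set {1..n}.
  Positions are 0-indexed in the list; index i (paper, 1-indexed, 2 \<le> i \<le> n-1)
  corresponds to list position i-1.\<close>

definition changes_dir_at :: "nat list \<Rightarrow> nat \<Rightarrow> bool" where
  "changes_dir_at p j \<longleftrightarrow> 1 \<le> j \<and> j + 1 < length p \<and>
     ((p ! (j-1) < p ! j \<and> p ! j > p ! (j+1)) \<or> (p ! (j-1) > p ! j \<and> p ! j < p ! (j+1)))"

definition run :: "nat list \<Rightarrow> nat" where
  "run p = card {j. changes_dir_at p j} + 1"

text \<open>Complement of a string of distinct integers relative to its underlying set S:
  the element of rank r (0-based, from the bottom) is replaced by the element of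
  rank r from the top.\<close>
definition complement :: "nat list \<Rightarrow> nat list" where
  "complement s = map (\<lambda>x. rev (sorted_list_of_set (set s)) ! card {y \<in> set s. y < x}) s"

definition cmap :: "nat \<Rightarrow> nat list \<Rightarrow> nat list" where
  "cmap i p = take (i - 1) p @ complement (drop (i - 1) p)"

definition Cn :: "nat \<Rightarrow> nat set" where
  "Cn n = (if even n then {i. odd i \<and> 3 \<le> i \<and> i \<le> n - 1}
                     else {i. odd i \<and> 3 \<le> i \<and> i \<le> n - 2})"

text \<open>Orbit of p under the group generated by the involutions c_i, i \<in> Cn n
  (as the generators are involutions, the generated group equals the generated monoid).\<close>
definition orbit :: "nat \<Rightarrow> nat list \<Rightarrow> nat list set" where
  "orbit n p = {q. (p, q) \<in> {(x, cmap i x) | x i. i \<in> Cn n}\<^sup>*}"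

end

(*
  The map c_i keeps p_1 ... p_(i-1) and reverses the relative order of the remaining entries.
  Hence it preserves whether p changes direction at every position except i - 1 and i, and
  there exactly one of the two statuses toggles: the status at a position records whether the
  two comparisons next to it disagree, and c_i keeps the comparison of p_(i-2), p_(i-1),
  reverses that of p_i, p_(i+1), and does something arbitrary to that of p_(i-1), p_i.
  As the indices in C_n are odd, the blocks {i - 1, i} are disjoint, so the number of
  direction changes inside block i records whether c_i was applied. Therefore the commuting
  involutions c_i act freely, each orbit has 2^m elements, and run splits into a part common
  to the orbit plus, for each i, one of two consecutive numbers, which makes the generating
  function of run over an orbit factor as z^a (1 + z)^m.
*)

theory Submission
  imports Defs
begin

lemma card_doubleton_Int: "a \<noteq> b \<Longrightarrow> card ({a, b} \<inter> C) = of_bool (a \<in> C) + of_bool (b \<in> C)"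
  by (cases "a \<in> C"; cases "b \<in> C") auto

lemma card_eq_card_Diff_UN_plus_sum:
  assumes "finite C" "finite I" "\<And>i k. i \<in> I \<Longrightarrow> k \<in> I \<Longrightarrow> i \<noteq> k \<Longrightarrow> B i \<inter> B k = {}"
  shows "card C = card (C - (\<Union>i\<in>I. B i)) + (\<Sum>i\<in>I. card (B i \<inter> C))"
proof -
  have "C \<inter> (\<Union>i\<in>I. B i) = (\<Union>i\<in>I. B i \<inter> C)" by auto
  moreover have "card (\<Union>i\<in>I. B i \<inter> C) = (\<Sum>i\<in>I. card (B i \<inter> C))"
    using assms by (intro card_UN_disjoint) auto
  ultimately show ?thesis using card_Int_Diff[OF assms(1), of "\<Union>i\<in>I. B i"] by simp
qed

lemma sum_Pow_power_choice:
  fixes X :: "'a::comm_semiring_1" and x y :: "'i \<Rightarrow> nat"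
  assumes "finite P" and "\<And>i. i \<in> P \<Longrightarrow> y i = x i + 1 \<or> x i = y i + 1"
  shows "(\<Sum>S\<in>Pow P. X ^ (c + (\<Sum>i\<in>P. if i \<in> S then y i else x i)))
    = X ^ (c + (\<Sum>i\<in>P. min (x i) (y i))) * (1 + X) ^ card P"
proof -
  have "X ^ (\<Sum>i\<in>P. if i \<in> S then y i else x i) = (\<Prod>i\<in>S. X ^ y i) * (\<Prod>i\<in>P - S. X ^ x i)"
    if "S \<subseteq> P" for S
  proof -
    have "X ^ (\<Sum>i\<in>P. if i \<in> S then y i else x i) = (\<Prod>i\<in>P. if i \<in> S then X ^ y i else X ^ x i)"
      by (simp add: power_sum if_distrib)
    also have "\<dots> = (\<Prod>i\<in>P \<inter> S. X ^ y i) * (\<Prod>i\<in>P - S. X ^ x i)"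
      using prod.If_cases[OF assms(1), of "\<lambda>i. i \<in> S"] by (simp add: Diff_eq)
    finally show ?thesis using that by (simp add: Int_absorb1)
  qed
  then have "(\<Sum>S\<in>Pow P. X ^ (\<Sum>i\<in>P. if i \<in> S then y i else x i)) = (\<Prod>i\<in>P. X ^ y i + X ^ x i)"
    by (simp add: prod_add[OF assms(1)])
  also have "\<dots> = (\<Prod>i\<in>P. X ^ min (x i) (y i) * (1 + X))"
  proof (rule prod.cong)
    fix i assume "i \<in> P"
    then show "X ^ y i + X ^ x i = X ^ min (x i) (y i) * (1 + X)"
      using assms(2)[OF \<open>i \<in> P\<close>] by (elim disjE) (simp_all add: algebra_simps)
  qed simp
  also have "\<dots> = X ^ (\<Sum>i\<in>P. min (x i) (y i)) * (1 + X) ^ card P"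
    by (simp add: prod.distrib power_sum)
  finally show ?thesis by (simp add: power_add mult.assoc flip: sum_distrib_left)
qed

locale commuting_involutions = comp_fun_commute f
  for f :: "'i \<Rightarrow> 'a \<Rightarrow> 'a" +
  assumes involution: "f i (f i x) = x"
begin

lemma fold_insert_first:
  "finite S \<Longrightarrow> i \<notin> S \<Longrightarrow> Finite_Set.fold f x (insert i S) = Finite_Set.fold f (f i x) S"
  by (simp add: fold_fun_left_comm)

lemma rtrancl_eq_fold_image:
  assumes "finite I"
  shows "{y. (x, y) \<in> {(z, f i z) | z i. i \<in> I}\<^sup>*} = (\<lambda>S. Finite_Set.fold f x S) ` Pow I"
    (is "{y. (x, y) \<in> ?R\<^sup>*} = _")
proof (intro set_eqI iffI)
  fix y assume "y \<in> {y. (x, y) \<in> ?R\<^sup>*}"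
  then have "(x, y) \<in> ?R\<^sup>*" by simp
  then show "y \<in> (\<lambda>S. Finite_Set.fold f x S) ` Pow I"
  proof (induction rule: rtrancl_induct)
    case base
    show ?case by (rule image_eqI[of _ _ "{}"]) auto
  next
    case (step y z)
    then obtain i S where i: "z = f i y" "i \<in> I" and S: "S \<subseteq> I" "y = Finite_Set.fold f x S"
      by auto
    have "finite S" using S(1) assms by (rule finite_subset)
    show ?case
    proof (cases "i \<in> S")
      case False
      then have "z = Finite_Set.fold f x (insert i S)" using i S \<open>finite S\<close> by simp
      then show ?thesis using S i by blast
    next
      case True
      then have "y = f i (Finite_Set.fold f x (S - {i}))"
        using S(2) fold_rec[OF \<open>finite S\<close>] by simp
      then have "z = Finite_Set.fold f x (S - {i})" using i involution by simp
      then show ?thesis using S by blast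
    qed
  qed
next
  fix y assume "y \<in> (\<lambda>S. Finite_Set.fold f x S) ` Pow I"
  then obtain S where S: "S \<subseteq> I" "y = Finite_Set.fold f x S" by auto
  have "finite S" using S(1) assms by (rule finite_subset)
  then have "(x, Finite_Set.fold f x S) \<in> ?R\<^sup>*" using S(1)
  proof (induction S rule: finite_induct)
    case (insert i S)
    then have "(Finite_Set.fold f x S, Finite_Set.fold f x (insert i S)) \<in> ?R" by auto
    then show ?case using insert by (meson insert_subset rtrancl_into_rtrancl)
  qed simp
  then show "y \<in> {y. (x, y) \<in> ?R\<^sup>*}" using S by simp
qed

lemma fold_invariant:
  "finite S \<Longrightarrow> (\<And>k y. k \<in> S \<Longrightarrow> g (f k y) = g y) \<Longrightarrow> g (Finite_Set.fold f x S) = g x"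
  by (induction S rule: finite_induct) simp_all

lemma fold_invariant_but_one:
  assumes "finite S" "\<And>k y. k \<in> S \<Longrightarrow> k \<noteq> i \<Longrightarrow> g (f k y) = g y"
  shows "g (Finite_Set.fold f x S) = (if i \<in> S then g (f i x) else g x)"
proof (cases "i \<in> S")
  case True
  then have "Finite_Set.fold f x S = Finite_Set.fold f (f i x) (S - {i})"
    using fold_insert_first[of "S - {i}" i x] assms(1) by (simp add: insert_absorb)
  then show ?thesis using True assms fold_invariant[of "S - {i}" g "f i x"] by simp
next
  case False
  then show ?thesis using assms fold_invariant[of S g x] by auto
qed

lemma inj_on_fold_Pow:
  assumes "finite I"
    and "\<And>i k y. i \<in> I \<Longrightarrow> k \<in> I \<Longrightarrow> k \<noteq> i \<Longrightarrow> g i (f k y) = g i y"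
    and "\<And>i. i \<in> I \<Longrightarrow> g i (f i x) \<noteq> g i x"
  shows "inj_on (\<lambda>S. Finite_Set.fold f x S) (Pow I)"
proof (rule inj_onI)
  fix S T assume S: "S \<in> Pow I" and T: "T \<in> Pow I"
    and eq: "Finite_Set.fold f x S = Finite_Set.fold f x T"
  have "finite S" "finite T" using S T assms(1) finite_subset by auto
  have "i \<in> S \<longleftrightarrow> i \<in> T" if "i \<in> I" for i
  proof -
    have "g i (f k y) = g i y" if "k \<in> S \<union> T" "k \<noteq> i" for k y
      using assms(2) \<open>i \<in> I\<close> S T that by auto
    then have "(if i \<in> S then g i (f i x) else g i x) = (if i \<in> T then g i (f i x) else g i x)"
      using fold_invariant_but_one[OF \<open>finite S\<close>, of i "g i" x]
        fold_invariant_but_one[OF \<open>finite T\<close>, of i "g i" x] eq by simp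
    then show ?thesis using assms(3)[OF that] by (auto split: if_splits)
  qed
  then show "S = T" using S T by blast
qed

end

definition rank :: "nat set \<Rightarrow> nat \<Rightarrow> nat" where
  "rank V x = card {y \<in> V. y < x}"

definition mirror :: "nat set \<Rightarrow> nat \<Rightarrow> nat" where
  "mirror V x = rev (sorted_list_of_set V) ! rank V x"

lemma complement_eq_map_mirror: "complement s = map (mirror (set s)) s"
  by (simp add: complement_def mirror_def rank_def)

lemma rank_less_card: "finite V \<Longrightarrow> x \<in> V \<Longrightarrow> rank V x < card V"
  unfolding rank_def by (rule psubset_card_mono) auto

lemma strict_mono_on_rank: "finite V \<Longrightarrow> strict_mono_on V (rank V)"
  unfolding rank_def by (intro strict_mono_onI psubset_card_mono) auto

lemma mirror_eq_nth_sorted: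
  "finite V \<Longrightarrow> x \<in> V \<Longrightarrow> mirror V x = sorted_list_of_set V ! (card V - 1 - rank V x)"
  using rank_less_card[of V x] by (simp add: mirror_def rev_nth)

lemma mirror_in: "finite V \<Longrightarrow> x \<in> V \<Longrightarrow> mirror V x \<in> V"
  using rank_less_card[of V x] nth_mem[of "rank V x" "rev (sorted_list_of_set V)"]
  by (simp add: mirror_def)

lemma mirror_antimono:
  assumes "finite V" "x \<in> V" "y \<in> V" "x < y"
  shows "mirror V y < mirror V x"
proof -
  have "rank V x < rank V y" using strict_mono_on_rank[OF assms(1)] assms by (simp add: strict_mono_onD)
  moreover have "rank V y < card V" using rank_less_card assms by blast
  ultimately have "sorted_list_of_set V ! (card V - 1 - rank V y)
      < sorted_list_of_set V ! (card V - 1 - rank V x)"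
    by (intro sorted_wrt_nth_less[OF strict_sorted_list_of_set]) auto
  then show ?thesis using assms by (simp add: mirror_eq_nth_sorted)
qed

lemma mirror_less_iff:
  "finite V \<Longrightarrow> x \<in> V \<Longrightarrow> y \<in> V \<Longrightarrow> mirror V x < mirror V y \<longleftrightarrow> y < x"
  by (metis mirror_antimono less_asym' linorder_neqE_nat)

lemma inj_on_mirror: "finite V \<Longrightarrow> inj_on (mirror V) V"
  by (metis inj_onI linorder_neqE_nat mirror_antimono less_irrefl)

lemma mirror_image: "finite V \<Longrightarrow> mirror V ` V = V"
  by (metis card_image card_subset_eq image_subsetI inj_on_mirror mirror_in)

lemma rank_image_strict_mono_on:
  assumes "finite V" "strict_mono_on V f" "x \<in> V"
  shows "rank (f ` V) (f x) = rank V x"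
proof -
  have "{z \<in> f ` V. z < f x} = f ` {y \<in> V. y < x}"
    using strict_mono_on_less[OF assms(2) _ assms(3)] by auto
  moreover have "inj_on f {y \<in> V. y < x}"
    using strict_mono_on_imp_inj_on[OF assms(2)] by (rule inj_on_subset) auto
  ultimately show ?thesis by (simp add: rank_def card_image)
qed

lemma strict_mono_on_image_unique:
  fixes f g :: "nat \<Rightarrow> nat"
  assumes "finite V" "strict_mono_on V f" "strict_mono_on V g" "f ` V = g ` V" "x \<in> V"
  shows "f x = g x"
proof -
  have "rank (f ` V) (g x) = rank (f ` V) (f x)"
    using rank_image_strict_mono_on[of V f x] rank_image_strict_mono_on[of V g x] assms by simp
  moreover have "f x \<in> f ` V" "g x \<in> f ` V" using assms(4,5) by auto
  ultimately show ?thesis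
    using strict_mono_on_eqD[OF strict_mono_on_rank] assms(1) by blast
qed

lemma mirror_mirror:
  assumes "finite V" "x \<in> V"
  shows "mirror V (mirror V x) = x"
proof -
  have "(mirror V \<circ> mirror V) x = id x"
  proof (rule strict_mono_on_image_unique[OF assms(1) _ _ _ assms(2)])
    show "strict_mono_on V (mirror V \<circ> mirror V)"
      using assms(1) by (intro strict_mono_onI) (simp add: mirror_less_iff mirror_in)
    show "(mirror V \<circ> mirror V) ` V = id ` V"
      unfolding image_comp[symmetric] mirror_image[OF assms(1)] by simp
  qed (simp add: strict_mono_on_def monotone_on_def)
  then show ?thesis by simp
qed

lemma mirror_image_mirror:
  assumes "finite V" "K \<subseteq> V" "x \<in> K"
  shows "mirror (mirror V ` K) (mirror V x) = mirror V (mirror K x)"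
proof -
  have K: "finite K" using assms(1,2) by (rule finite_subset[rotated])
  have "finite (mirror V ` K)" using K by simp
  have "(mirror (mirror V ` K) \<circ> mirror V) x = (mirror V \<circ> mirror K) x"
  proof (rule strict_mono_on_image_unique[OF K _ _ _ assms(3)])
    show "strict_mono_on K (mirror (mirror V ` K) \<circ> mirror V)"
      using assms K \<open>finite (mirror V ` K)\<close>
      by (intro strict_mono_onI) (auto simp: mirror_less_iff mirror_in subsetD)
    show "strict_mono_on K (mirror V \<circ> mirror K)"
      using assms K by (intro strict_mono_onI) (auto simp: mirror_less_iff mirror_in subsetD)
    show "(mirror (mirror V ` K) \<circ> mirror V) ` K = (mirror V \<circ> mirror K) ` K"
      unfolding image_comp[symmetric] mirror_image[OF K] mirror_image[OF \<open>finite (mirror V ` K)\<close>] ..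
  qed
  then show ?thesis by simp
qed

lemma set_complement: "set (complement s) = set s"
  by (simp add: complement_eq_map_mirror mirror_image)

lemma length_complement: "length (complement s) = length s"
  by (simp add: complement_eq_map_mirror)

lemma distinct_complement: "distinct s \<Longrightarrow> distinct (complement s)"
  by (simp add: complement_eq_map_mirror distinct_map inj_on_mirror)

lemma length_cmap [simp]: "length (cmap i p) = length p"
  by (simp add: cmap_def length_complement)

lemma set_cmap: "set (cmap i p) = set p"
  by (metis cmap_def set_append set_complement append_take_drop_id)

lemma distinct_cmap: "distinct p \<Longrightarrow> distinct (cmap i p)"
  by (metis cmap_def append_take_drop_id distinct_append distinct_complement set_complement)

lemma nth_in_set_drop: "a \<le> t \<Longrightarrow> t < length q \<Longrightarrow> q ! t \<in> set (drop a q)"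
  using nth_mem[of "t - a" "drop a q"] by simp

lemma nth_cmap:
  "t < length p \<Longrightarrow>
    cmap i p ! t = (if t < i - 1 then p ! t else mirror (set (drop (i - 1) p)) (p ! t))"
  by (simp add: cmap_def nth_append complement_eq_map_mirror min_def)

lemma drop_cmap_before: "a < k - 1 \<Longrightarrow> drop a (cmap k p) = cmap (k - a) (drop a p)"
  by (cases "k - 1 \<le> length p") (simp_all add: cmap_def take_drop complement_def)

lemma drop_cmap_after:
  "i - 1 \<le> a \<Longrightarrow> drop a (cmap i p) = map (mirror (set (drop (i - 1) p))) (drop a p)"
  by (cases "i - 1 \<le> length p") (simp_all add: cmap_def complement_eq_map_mirror drop_map)

lemma set_drop_cmap: "set (drop (i - 1) (cmap i p)) = set (drop (i - 1) p)"
  by (simp add: drop_cmap_after mirror_image)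

lemma cmap_cmap: "cmap i (cmap i p) = p"
  using set_drop_cmap[of i p]
  by (intro nth_equalityI) (auto simp: nth_cmap mirror_mirror nth_in_set_drop)

lemma cmap_commute_less:
  assumes "i - 1 < k - 1"
  shows "cmap i (cmap k p) = cmap k (cmap i p)"
proof (rule nth_equalityI)
  define Vi where "Vi = set (drop (i - 1) p)"
  define Vk where "Vk = set (drop (k - 1) p)"
  have "Vk \<subseteq> Vi" unfolding Vi_def Vk_def using assms by (simp add: set_drop_subset_set_drop)
  have Vi: "set (drop (i - 1) (cmap k p)) = Vi"
    using drop_cmap_before[OF assms] by (simp add: set_cmap Vi_def)
  have Vk: "set (drop (k - 1) (cmap i p)) = mirror Vi ` Vk"
    using drop_cmap_after[of i "k - 1" p] assms by (simp add: Vi_def Vk_def)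
  fix t assume "t < length (cmap i (cmap k p))"
  then have t: "t < length p" by simp
  show "cmap i (cmap k p) ! t = cmap k (cmap i p) ! t"
  proof (cases "t < k - 1")
    case True
    then show ?thesis using t Vi by (simp add: nth_cmap Vi_def)
  next
    case False
    then have "p ! t \<in> Vk" using t nth_in_set_drop[of "k - 1" t p] unfolding Vk_def by simp
    then show ?thesis
      using t False assms Vi Vk mirror_image_mirror[of Vi Vk "p ! t"] \<open>Vk \<subseteq> Vi\<close>
      by (simp add: nth_cmap Vi_def Vk_def)
  qed
qed simp

lemma cmap_commute: "cmap i (cmap k p) = cmap k (cmap i p)"
proof -
  consider "i - 1 < k - 1" | "k - 1 < i - 1" | "i - 1 = k - 1" by linarith
  then show ?thesis
  proof cases
    case 1
    then show ?thesis by (rule cmap_commute_less)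
  next
    case 2
    then show ?thesis by (rule cmap_commute_less[symmetric])
  next
    case 3
    then have "cmap i = cmap k" by (simp add: cmap_def fun_eq_iff)
    then show ?thesis by simp
  qed
qed

interpretation cmaps: commuting_involutions cmap
  by unfold_locales (simp_all add: fun_eq_iff cmap_commute cmap_cmap)

lemma changes_dir_at_iff_ascents:
  assumes "distinct q" "1 \<le> j" "j + 1 < length q"
  shows "changes_dir_at q j \<longleftrightarrow> (q ! (j - 1) < q ! j) \<noteq> (q ! j < q ! (j + 1))"
proof -
  have "q ! (j - 1) \<noteq> q ! j" "q ! j \<noteq> q ! (j + 1)"
    using assms by (simp_all add: nth_eq_iff_index_eq)
  then show ?thesis using assms(2,3) by (auto simp: changes_dir_at_def)
qed

lemma changes_dir_at_cmap_far:
  assumes "j + 2 < i \<or> i \<le> j"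
  shows "changes_dir_at (cmap i q) j = changes_dir_at q j"
proof (cases "1 \<le> j \<and> j + 1 < length q")
  case False
  then show ?thesis by (auto simp: changes_dir_at_def)
next
  case True
  show ?thesis
  proof (cases "j + 2 < i")
    case True
    with \<open>1 \<le> j \<and> j + 1 < length q\<close>
    have "cmap i q ! (j - 1) = q ! (j - 1)" "cmap i q ! j = q ! j" "cmap i q ! (j + 1) = q ! (j + 1)"
      by (auto simp: nth_cmap)
    then show ?thesis by (simp add: changes_dir_at_def)
  next
    case False
    define V where "V = set (drop (i - 1) q)"
    have "i \<le> j" using False assms by simp
    with True have in_V: "q ! (j - 1) \<in> V" "q ! j \<in> V" "q ! (j + 1) \<in> V"
      using nth_in_set_drop[of "i - 1" _ q] unfolding V_def by auto
    from \<open>i \<le> j\<close> True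
    have "cmap i q ! (j - 1) = mirror V (q ! (j - 1))" "cmap i q ! j = mirror V (q ! j)"
      "cmap i q ! (j + 1) = mirror V (q ! (j + 1))"
      by (auto simp: nth_cmap V_def)
    moreover have "finite V" by (simp add: V_def)
    ultimately show ?thesis using mirror_less_iff[of V] in_V by (auto simp: changes_dir_at_def)
  qed
qed

lemma changes_dir_at_cmap_boundary:
  assumes "distinct q" "3 \<le> i" "i < length q"
  shows "(changes_dir_at (cmap i q) (i - 2) \<noteq> changes_dir_at q (i - 2)) \<noteq>
    (changes_dir_at (cmap i q) (i - 1) \<noteq> changes_dir_at q (i - 1))"
proof -
  obtain s where s: "i = s + 3" using assms(2) by (metis add.commute le_iff_add)
  define V where "V = set (drop (i - 1) q)"
  have in_V: "q ! (s + 2) \<in> V" "q ! (s + 3) \<in> V"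
    using assms s nth_in_set_drop[of "i - 1" _ q] unfolding V_def by auto
  have "q ! (s + 2) \<noteq> q ! (s + 3)" using assms s by (simp add: nth_eq_iff_index_eq)
  then have reversed: "mirror V (q ! (s + 2)) < mirror V (q ! (s + 3)) \<longleftrightarrow> \<not> q ! (s + 2) < q ! (s + 3)"
    using mirror_less_iff[OF _ in_V] by (auto simp: V_def)
  have "cmap i q ! s = q ! s" "cmap i q ! (s + 1) = q ! (s + 1)"
    "cmap i q ! (s + 2) = mirror V (q ! (s + 2))" "cmap i q ! (s + 3) = mirror V (q ! (s + 3))"
    using assms s by (auto simp: nth_cmap V_def)
  then show ?thesis
    using changes_dir_at_iff_ascents[OF assms(1), of "s + 1"]
      changes_dir_at_iff_ascents[OF assms(1), of "s + 2"]
      changes_dir_at_iff_ascents[OF distinct_cmap[OF assms(1)], of "s + 1" i]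
      changes_dir_at_iff_ascents[OF distinct_cmap[OF assms(1)], of "s + 2" i]
      reversed s assms(3)
    by (auto simp: numeral_eq_Suc)
qed

text \<open>List positions \<open>i - 2\<close> and \<open>i - 1\<close> are the paper's positions \<open>i - 1\<close> and \<open>i\<close>.\<close>
definition boundary_changes :: "nat \<Rightarrow> nat list \<Rightarrow> nat" where
  "boundary_changes i q = card ({i - 2, i - 1} \<inter> {j. changes_dir_at q j})"

lemma boundary_changes_cmap:
  assumes "distinct q" "3 \<le> i" "i < length q"
  shows "boundary_changes i (cmap i q) = boundary_changes i q + 1 \<or>
    boundary_changes i q = boundary_changes i (cmap i q) + 1"
proof -
  have "i - 2 \<noteq> i - 1" using assms(2) by simp
  then show ?thesis
    using changes_dir_at_cmap_boundary[OF assms] by (auto simp: boundary_changes_def card_doubleton_Int)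
qed

lemma CnD: "i \<in> Cn n \<Longrightarrow> odd i \<and> 3 \<le> i \<and> i < n"
  by (auto simp: Cn_def split: if_splits)

lemma finite_Cn: "finite (Cn n)"
  by (rule finite_subset[of _ "{..n}"]) (auto dest: CnD)

lemma card_Cn: "card (Cn n) = (n - 2) div 2"
proof -
  have "Cn n = (\<lambda>t. 2 * t + 1) ` {1..(n - 2) div 2}"
  proof (intro set_eqI iffI)
    fix i assume "i \<in> Cn n"
    moreover from this obtain t where "i = 2 * t + 1" using CnD oddE by blast
    ultimately show "i \<in> (\<lambda>t. 2 * t + 1) ` {1..(n - 2) div 2}"
      by (auto simp: Cn_def split: if_splits)
  next
    fix i assume "i \<in> (\<lambda>t. 2 * t + 1) ` {1..(n - 2) div 2}"
    then show "i \<in> Cn n" by (auto simp: Cn_def) presburger+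
  qed
  moreover have "inj (\<lambda>t. 2 * t + 1 :: nat)" by (auto intro: injI)
  ultimately show ?thesis by (simp add: card_image inj_on_subset)
qed

lemma Cn_separated: "i \<in> Cn n \<Longrightarrow> k \<in> Cn n \<Longrightarrow> i \<noteq> k \<Longrightarrow> i + 2 \<le> k \<or> k + 2 \<le> i"
  by (auto dest!: CnD elim!: oddE)

lemma boundary_changes_cmap_other:
  assumes "i \<in> Cn n" "k \<in> Cn n" "k \<noteq> i"
  shows "boundary_changes i (cmap k q) = boundary_changes i q"
proof -
  have "j + 2 < k \<or> k \<le> j" if "j \<in> {i - 2, i - 1}" for j
    using that assms Cn_separated[of i n k] CnD[OF assms(1)] by auto
  then have "{i - 2, i - 1} \<inter> {j. changes_dir_at (cmap k q) j} = {i - 2, i - 1} \<inter> {j. changes_dir_at q j}"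
    using changes_dir_at_cmap_far by blast
  then show ?thesis by (simp add: boundary_changes_def)
qed

lemma changes_dir_at_cmap_off_boundaries:
  assumes "k \<in> Cn n" "j \<notin> (\<Union>i\<in>Cn n. {i - 2, i - 1})"
  shows "changes_dir_at (cmap k q) j = changes_dir_at q j"
proof -
  have "j + 2 < k \<or> k \<le> j" using assms CnD[OF assms(1)] by auto
  then show ?thesis by (rule changes_dir_at_cmap_far)
qed

lemma finite_changes_dir_at: "finite {j. changes_dir_at q j}"
  by (rule finite_subset[of _ "{..<length q}"]) (auto simp: changes_dir_at_def)

lemma run_eq_off_boundaries_plus_boundary_changes:
  "run q = 1 + card ({j. changes_dir_at q j} - (\<Union>i\<in>Cn n. {i - 2, i - 1}))
    + (\<Sum>i\<in>Cn n. boundary_changes i q)"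
proof -
  have "{i - 2, i - 1} \<inter> {k - 2, k - 1} = {}" if "i \<in> Cn n" "k \<in> Cn n" "i \<noteq> k" for i k
    using Cn_separated[OF that] CnD[OF that(1)] CnD[OF that(2)] by auto
  then show ?thesis
    using card_eq_card_Diff_UN_plus_sum[OF finite_changes_dir_at finite_Cn, where B = "\<lambda>i. {i - 2, i - 1}"]
    by (simp add: run_def boundary_changes_def)
qed

lemma orbit_eq_fold_image: "orbit n p = (\<lambda>S. Finite_Set.fold cmap p S) ` Pow (Cn n)"
  unfolding orbit_def by (rule cmaps.rtrancl_eq_fold_image[OF finite_Cn])

lemma boundary_changes_cmap_Cn:
  assumes "p \<in> permutations_of_set {1..n}" "i \<in> Cn n"
  shows "boundary_changes i (cmap i p) = boundary_changes i p + 1 \<or>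
    boundary_changes i p = boundary_changes i (cmap i p) + 1"
proof (rule boundary_changes_cmap)
  show "distinct p" using assms(1) by (rule permutations_of_setD(2))
  show "3 \<le> i" "i < length p"
    using CnD[OF assms(2)] length_finite_permutations_of_set[OF assms(1)] by simp_all
qed

lemma inj_on_fold_cmap:
  assumes "p \<in> permutations_of_set {1..n}"
  shows "inj_on (\<lambda>S. Finite_Set.fold cmap p S) (Pow (Cn n))"
proof (rule cmaps.inj_on_fold_Pow[OF finite_Cn, where g = boundary_changes])
  show "boundary_changes i (cmap k q) = boundary_changes i q" if "i \<in> Cn n" "k \<in> Cn n" "k \<noteq> i" for i k q
    using that by (rule boundary_changes_cmap_other)
  show "boundary_changes i (cmap i p) \<noteq> boundary_changes i p" if "i \<in> Cn n" for i
    using boundary_changes_cmap_Cn[OF assms that] by auto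
qed

lemma run_fold_cmap:
  assumes "S \<subseteq> Cn n"
  shows "run (Finite_Set.fold cmap p S) =
    1 + card ({j. changes_dir_at p j} - (\<Union>i\<in>Cn n. {i - 2, i - 1})) +
    (\<Sum>i\<in>Cn n. if i \<in> S then boundary_changes i (cmap i p) else boundary_changes i p)"
proof -
  let ?q = "Finite_Set.fold cmap p S"
  have "finite S" using assms finite_Cn by (rule finite_subset)
  have "changes_dir_at ?q j = changes_dir_at p j" if "j \<notin> (\<Union>i\<in>Cn n. {i - 2, i - 1})" for j
    by (rule cmaps.fold_invariant[OF \<open>finite S\<close>])
      (use changes_dir_at_cmap_off_boundaries assms that in blast)
  then have "{j. changes_dir_at ?q j} - (\<Union>i\<in>Cn n. {i - 2, i - 1})
      = {j. changes_dir_at p j} - (\<Union>i\<in>Cn n. {i - 2, i - 1})"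
    by blast
  moreover have "boundary_changes i ?q =
      (if i \<in> S then boundary_changes i (cmap i p) else boundary_changes i p)" if "i \<in> Cn n" for i
    by (rule cmaps.fold_invariant_but_one[OF \<open>finite S\<close>])
      (use boundary_changes_cmap_other[OF that] assms in blast)
  ultimately show ?thesis
    using run_eq_off_boundaries_plus_boundary_changes[of ?q n] by simp
qed

theorem mainTheorem3:
  fixes n :: nat and p :: "nat list"
  assumes "n \<ge> 4"
    and "p \<in> permutations_of_set {1..n}"
  shows "card (orbit n p) = 2 ^ ((n - 2) div 2) \<and>
         (\<exists>a::nat. (\<Sum>q\<in>orbit n p. monom (1::int) (run q))
                     = monom 1 a * [:1, 1:] ^ ((n - 2) div 2))"
proof -
  let ?F = "\<lambda>S. Finite_Set.fold cmap p S"
  have inj: "inj_on ?F (Pow (Cn n))" using assms(2) by (rule inj_on_fold_cmap)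
  have card: "card (orbit n p) = 2 ^ ((n - 2) div 2)"
    by (simp add: orbit_eq_fold_image card_image[OF inj] card_Pow finite_Cn card_Cn)
  define r where "r = card ({j. changes_dir_at p j} - (\<Union>i\<in>Cn n. {i - 2, i - 1}))"
  define x where "x i = boundary_changes i p" for i
  define y where "y i = boundary_changes i (cmap i p)" for i
  have "(\<Sum>q\<in>orbit n p. monom (1::int) (run q)) = (\<Sum>S\<in>Pow (Cn n). [:0, 1:] ^ run (?F S))"
    by (simp add: orbit_eq_fold_image sum.reindex[OF inj] monom_altdef)
  also have "\<dots> = (\<Sum>S\<in>Pow (Cn n). [:0, 1:] ^ (1 + r + (\<Sum>i\<in>Cn n. if i \<in> S then y i else x i)))"
    unfolding r_def x_def y_def by (intro sum.cong) (simp_all add: run_fold_cmap)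
  also have "\<dots> = [:0, 1:] ^ (1 + r + (\<Sum>i\<in>Cn n. min (x i) (y i))) * (1 + [:0, 1:]) ^ card (Cn n)"
    using boundary_changes_cmap_Cn[OF assms(2)] unfolding x_def y_def
    by (intro sum_Pow_power_choice finite_Cn) blast
  also have "\<dots> = monom 1 (1 + r + (\<Sum>i\<in>Cn n. min (x i) (y i))) * [:1, 1:] ^ ((n - 2) div 2)"
    by (simp add: monom_altdef card_Cn one_pCons)
  finally show ?thesis using card by blast
qed

end
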